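(* Let $t\geq 7$ and $n\geq 2t-2$ be integers. Then the generic second symmetric power of $U_n^t$ is not the unique maximal element, with respect to the weak order, in the family of all second symmetric powers of $U_n^t$.
   Context: Let $V$ be a set with $|V|=n$ and let $U_n^t$ be the uniform matroid of rank $t$ on $V$. Let $K_V^{\circ}$ be the complete graph on $V$ with a loop $\{v,v\}$ added at each vertex $v$. For $v\in V$ and $X\subseteq V$ put $vX=\{\{v,x\}:x\in X\}\subseteq E(K_V^\circ)$. Given a matroid $M$ on $V$ of rank $t$, a matroid $N$ on $E(K_V^\circ)$ is a second symmetric power of $M$ if (S1) $N$ has rank $\binom{t+1}{2}$, and (S2) $r_M(X)=r_N(vX)$ for all $X\subseteq V$ and all $v\in V$. The generic second symmetric power of $U_n^t$ is the linear matroid on $E(K_V^\circ)$ obtained by choosing generic vectors $p_v\in\mathbb{R}^t$ ($v\in V$) and representing each element $\{u,v\}$ (including loops $u=v$) by the symmetric matrix $p_up_v^T+p_vp_u^T$. For matroids $M_1,M_2$ on the same ground set, the weak order is $M_1\preceq M_2$ iff every independent set of $M_1$ is independent in $M_2$. *)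

theory Defs
  imports Complex_Main
begin

definition matroid :: "'b set \<Rightarrow> ('b set \<Rightarrow> bool) \<Rightarrow> bool" where
  "matroid E indep \<longleftrightarrow>
     finite E \<and>
     (\<forall>I. indep I \<longrightarrow> I \<subseteq> E) \<and>
     indep {} \<and>
     (\<forall>I J. indep J \<and> I \<subseteq> J \<longrightarrow> indep I) \<and>
     (\<forall>I J. indep I \<and> indep J \<and> card I < card J \<longrightarrow>
        (\<exists>x\<in>J - I. indep (insert x I)))"

definition mrank :: "('b set \<Rightarrow> bool) \<Rightarrow> 'b set \<Rightarrow> nat" where
  "mrank indep X = Max (card ` {I. I \<subseteq> X \<and> indep I})"

definition weak_le :: "('b set \<Rightarrow> bool) \<Rightarrow> ('b set \<Rightarrow> bool) \<Rightarrow> bool" where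
  "weak_le M1 M2 \<longleftrightarrow> (\<forall>I. M1 I \<longrightarrow> M2 I)"

definition uniform_indep :: "'a set \<Rightarrow> nat \<Rightarrow> 'a set \<Rightarrow> bool" where
  "uniform_indep V t I \<longleftrightarrow> I \<subseteq> V \<and> card I \<le> t"

text \<open>Edges of K_V with a loop at every vertex: sets {u,v} with u,v in V (loops are {v}).\<close>
definition loop_edges :: "'a set \<Rightarrow> 'a set set" where
  "loop_edges V = {{u, v} | u v. u \<in> V \<and> v \<in> V}"

definition star :: "'a \<Rightarrow> 'a set \<Rightarrow> 'a set set" where
  "star v X = {{v, x} | x. x \<in> X}"

definition second_sym_power ::
  "'a set \<Rightarrow> nat \<Rightarrow> ('a set \<Rightarrow> bool) \<Rightarrow> ('a set set \<Rightarrow> bool) \<Rightarrow> bool" where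
  "second_sym_power V t M N \<longleftrightarrow>
     matroid (loop_edges V) N \<and>
     mrank N (loop_edges V) = (t + 1) choose 2 \<and>
     (\<forall>X v. X \<subseteq> V \<and> v \<in> V \<longrightarrow> mrank M X = mrank N (star v X))"

text \<open>The symmetric t x t matrix p_u p_v^T + p_v p_u^T attached to an edge e = {u,v};
  vectors in R^t are functions nat => real of which only the coordinates < t matter.\<close>
definition sym_mat :: "('a \<Rightarrow> nat \<Rightarrow> real) \<Rightarrow> 'a set \<Rightarrow> nat \<Rightarrow> nat \<Rightarrow> real" where
  "sym_mat p e i j =
     (case (SOME (u, v). e = {u, v}) of (u, v) \<Rightarrow> p u i * p v j + p v i * p u j)"

definition sym_lin_indep :: "nat \<Rightarrow> ('a \<Rightarrow> nat \<Rightarrow> real) \<Rightarrow> 'a set set \<Rightarrow> bool" where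
  "sym_lin_indep t p F \<longleftrightarrow>
     (\<forall>c. (\<forall>i<t. \<forall>j<t. (\<Sum>e\<in>F. c e * sym_mat p e i j) = 0) \<longrightarrow> (\<forall>e\<in>F. c e = 0))"

text \<open>Since independence of a set is a Zariski-open condition on p, a set is
  independent for generic p iff it is independent for some p.\<close>
definition generic_sym_power :: "'a set \<Rightarrow> nat \<Rightarrow> 'a set set \<Rightarrow> bool" where
  "generic_sym_power V t F \<longleftrightarrow>
     F \<subseteq> loop_edges V \<and> (\<exists>p. sym_lin_indep t p F)"

definition unique_maximal_sym_power ::
  "'a set \<Rightarrow> nat \<Rightarrow> ('a set \<Rightarrow> bool) \<Rightarrow> ('a set set \<Rightarrow> bool) \<Rightarrow> bool" where
  "unique_maximal_sym_power V t M G \<longleftrightarrow>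
     second_sym_power V t M G \<and>
     (\<forall>N. second_sym_power V t M N \<and> weak_le G N \<longrightarrow> N = G) \<and>
     (\<forall>N. second_sym_power V t M N \<and>
          (\<forall>N'. second_sym_power V t M N' \<and> weak_le N N' \<longrightarrow> N' = N) \<longrightarrow> N = G)"

end

(* Enumerate V as 0, ..., n - 1 and send a vertex x with index s to the moment vector
   q x = (1, s, ..., s^(t-1)).  An edge {u, v} gets the symmetric matrix q_u q_v^T + q_v q_u^T,
   but the loop at x gets q_x y_x^T + y_x q_x^T, where y_x = q_x + q_x' for each of the first
   t - 1 vertices (x' one of them with adjacent index) and y_x is the moment vector of a negative
   node for all other vertices.  Linear relations are tested against the forms
   M |-> sum_{i,j<t} P_i Q_j M_ij for polynomials P, Q of degree < t, which turn q_x into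
   evaluation at s.  This shows that the resulting linear matroid is a second symmetric power of
   U_n^t (stars of at most t edges are independent by a Vandermonde argument, and the looped
   clique on the first t vertices is a basis), and that it makes the looped cliques on the first
   t - 1 vertices and on two further vertices jointly independent.  In the generic symmetric
   power that set is dependent: the t + 1 points satisfy a relation sum_x a_x p_x = 0, and the
   symmetric squares of its two halves cancel.  Hence the construction lies below a maximal
   second symmetric power other than the generic one. *)

theory Submission
  imports Defs "HOL-Library.Function_Algebras" "HOL-Library.Indicator_Function"
    "HOL-Computational_Algebra.Polynomial"
begin

section \<open>Linearly independent families of real-valued functions\<close>

definition scale_fun :: "real \<Rightarrow> ('b \<Rightarrow> real) \<Rightarrow> 'b \<Rightarrow> real" where
  "scale_fun c f = (\<lambda>x. c * f x)"

interpretation fun_space: vector_space "scale_fun :: real \<Rightarrow> ('b \<Rightarrow> real) \<Rightarrow> 'b \<Rightarrow> real"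
  by unfold_locales (auto simp: scale_fun_def algebra_simps)

lemma scale_fun_apply [simp]: "scale_fun c f x = c * f x"
  by (simp add: scale_fun_def)

lemma sum_fun_apply: "(\<Sum>e\<in>I. f e) x = (\<Sum>e\<in>I. f e x)"
  by (induction I rule: infinite_finite_induct) auto

lemma sum_scale_fun_in_span: "(\<Sum>k\<in>K. scale_fun (a k) (b k)) \<in> fun_space.span (b ` K)"
  by (intro fun_space.span_sum fun_space.span_scale fun_space.span_base) auto

lemma span_trans:
  assumes "x \<in> fun_space.span A" "A \<subseteq> fun_space.span B"
  shows "x \<in> fun_space.span B"
proof -
  have "fun_space.span A \<subseteq> fun_space.span B"
    using fun_space.span_mono[OF assms(2)] by (simp add: fun_space.span_span)
  with assms(1) show ?thesis by blast
qed

definition lin_indep :: "('e \<Rightarrow> 'b \<Rightarrow> real) \<Rightarrow> 'e set \<Rightarrow> bool" where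
  "lin_indep \<phi> I \<longleftrightarrow> (\<forall>c. (\<forall>x. (\<Sum>e\<in>I. c e * \<phi> e x) = 0) \<longrightarrow> (\<forall>e\<in>I. c e = 0))"

lemma lin_indepD:
  "lin_indep \<phi> I \<Longrightarrow> (\<And>x. (\<Sum>e\<in>I. c e * \<phi> e x) = 0) \<Longrightarrow> e \<in> I \<Longrightarrow> c e = 0"
  unfolding lin_indep_def by blast

lemma lin_indep_cong: "(\<And>x. x \<in> I \<Longrightarrow> \<phi> x = \<psi> x) \<Longrightarrow> lin_indep \<phi> I \<longleftrightarrow> lin_indep \<psi> I"
  by (simp add: lin_indep_def)

lemma lin_indep_imp_finite:
  assumes "lin_indep \<phi> I"
  shows "finite I"
proof (rule ccontr)
  assume "infinite I"
  then have "I = {}"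
    using lin_indepD[OF assms, of "\<lambda>_. 1"] by auto
  with \<open>infinite I\<close> show False by simp
qed

lemma lin_indep_subset:
  assumes "lin_indep \<phi> J" "I \<subseteq> J"
  shows "lin_indep \<phi> I"
  unfolding lin_indep_def
proof (intro allI impI)
  fix c assume rel: "\<forall>x. (\<Sum>e\<in>I. c e * \<phi> e x) = 0"
  define c' where "c' e = (if e \<in> I then c e else 0)" for e
  have "(\<Sum>e\<in>J. c' e * \<phi> e x) = (\<Sum>e\<in>I. c e * \<phi> e x)" for x
    using assms(2) lin_indep_imp_finite[OF assms(1)]
    by (intro sum.mono_neutral_cong_right) (auto simp: c'_def)
  then have "\<forall>e\<in>J. c' e = 0"
    using lin_indepD[OF assms(1), of c'] rel by auto
  then show "\<forall>e\<in>I. c e = 0"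
    using assms(2) by (force simp: c'_def)
qed

lemma lin_indep_image:
  assumes "inj_on f Y"
  shows "lin_indep \<phi> (f ` Y) \<longleftrightarrow> lin_indep (\<lambda>x. \<phi> (f x)) Y"
proof
  assume ind: "lin_indep \<phi> (f ` Y)"
  show "lin_indep (\<lambda>x. \<phi> (f x)) Y"
    unfolding lin_indep_def
  proof (intro allI impI ballI)
    fix c x assume rel: "\<forall>i. (\<Sum>x\<in>Y. c x * \<phi> (f x) i) = 0" and x: "x \<in> Y"
    have "(\<Sum>e\<in>f ` Y. c (the_inv_into Y f e) * \<phi> e i) = 0" for i
      using rel by (simp add: sum.reindex[OF assms] the_inv_into_f_f[OF assms])
    then have "c (the_inv_into Y f (f x)) = 0"
      using lin_indepD[OF ind, of "\<lambda>e. c (the_inv_into Y f e)" "f x"] x by blast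
    then show "c x = 0" by (simp add: the_inv_into_f_f[OF assms x])
  qed
next
  assume ind: "lin_indep (\<lambda>x. \<phi> (f x)) Y"
  show "lin_indep \<phi> (f ` Y)"
    unfolding lin_indep_def
  proof (intro allI impI ballI)
    fix c e assume rel: "\<forall>i. (\<Sum>e\<in>f ` Y. c e * \<phi> e i) = 0" and "e \<in> f ` Y"
    then obtain x where "x \<in> Y" "e = f x" by blast
    moreover have "(\<Sum>x\<in>Y. c (f x) * \<phi> (f x) i) = 0" for i
      using rel by (simp add: sum.reindex[OF assms])
    ultimately show "c e = 0" using lin_indepD[OF ind, of "\<lambda>x. c (f x)"] by blast
  qed
qed

lemma lin_indep_Un:
  assumes "finite A" "finite B" "A \<inter> B = {}" "lin_indep \<phi> A"
    and "\<And>c. (\<And>x. (\<Sum>e\<in>A \<union> B. c e * \<phi> e x) = 0) \<Longrightarrow> \<forall>e\<in>B. c e = 0"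
  shows "lin_indep \<phi> (A \<union> B)"
  unfolding lin_indep_def
proof (intro allI impI)
  fix c assume rel: "\<forall>x. (\<Sum>e\<in>A \<union> B. c e * \<phi> e x) = 0"
  then have B0: "\<forall>e\<in>B. c e = 0" using assms(5) by blast
  have "(\<Sum>e\<in>A. c e * \<phi> e x) = 0" for x
    using rel B0 assms(1-3) by (simp add: sum.union_disjoint)
  then have "\<forall>e\<in>A. c e = 0" using lin_indepD[OF assms(4)] by blast
  with B0 show "\<forall>e\<in>A \<union> B. c e = 0" by blast
qed

lemma sum_eq_0_single_term:
  assumes "finite I" "e \<in> I" "(\<Sum>i\<in>I. f i) = 0" "\<And>i. i \<in> I \<Longrightarrow> i \<noteq> e \<Longrightarrow> f i = 0"
  shows "f e = 0"
proof -
  have "(\<Sum>i\<in>I - {e}. f i) = 0" using assms(4) by (intro sum.neutral) blast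
  then show ?thesis using assms(1-3) by (simp add: sum.remove)
qed

lemma lin_indep_add_column:
  assumes "lin_indep \<phi> I" "v \<in> I" "w \<in> I" "v \<noteq> w"
  shows "lin_indep (\<phi>(v := \<phi> v + \<phi> w)) I"
  unfolding lin_indep_def
proof (intro allI impI)
  fix c assume rel: "\<forall>x. (\<Sum>e\<in>I. c e * (\<phi>(v := \<phi> v + \<phi> w)) e x) = 0"
  define c' where "c' = c(w := c w + c v)"
  have fin: "finite I" using assms(1) by (rule lin_indep_imp_finite)
  have "(\<Sum>e\<in>I. c' e * \<phi> e x) = (\<Sum>e\<in>I. c e * \<phi> e x) + c v * \<phi> w x" for x
  proof -
    have "c' e * \<phi> e x = c e * \<phi> e x + (if e = w then c v * \<phi> w x else 0)" for e
      by (simp add: c'_def algebra_simps)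
    then show ?thesis using fin assms(3) by (simp add: sum.distrib)
  qed
  moreover have "(\<Sum>e\<in>I. c e * (\<phi>(v := \<phi> v + \<phi> w)) e x)
      = (\<Sum>e\<in>I. c e * \<phi> e x) + c v * \<phi> w x" for x
  proof -
    have "c e * (\<phi>(v := \<phi> v + \<phi> w)) e x = c e * \<phi> e x + (if e = v then c v * \<phi> w x else 0)"
      for e by (simp add: algebra_simps)
    then show ?thesis using fin assms(2) by (simp add: sum.distrib)
  qed
  ultimately have "(\<Sum>e\<in>I. c' e * \<phi> e x) = 0" for x using rel by simp
  then have c'0: "\<forall>e\<in>I. c' e = 0" using lin_indepD[OF assms(1), of c'] by blast
  then have "c v = 0" using bspec[OF c'0 assms(2)] assms(4) by (simp add: c'_def)
  moreover have "c w = 0" using bspec[OF c'0 assms(3)] \<open>c v = 0\<close> by (simp add: c'_def)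
  moreover have "c e = 0" if "e \<in> I" "e \<noteq> w" for e
    using bspec[OF c'0 that(1)] that(2) by (simp add: c'_def)
  ultimately show "\<forall>e\<in>I. c e = 0" by blast
qed

lemma lin_indep_imp_inj_on:
  assumes "lin_indep \<phi> I"
  shows "inj_on \<phi> I"
proof (rule inj_onI, rule ccontr)
  fix a b assume ab: "a \<in> I" "b \<in> I" "\<phi> a = \<phi> b" "a \<noteq> b"
  define c where "c e = (if e = a then 1 else if e = b then -1 else 0 :: real)" for e
  have "c e * \<phi> e x = (if e = a then \<phi> a x else 0) + (if e = b then - \<phi> b x else 0)"
    for e x using ab by (simp add: c_def)
  then have "(\<Sum>e\<in>I. c e * \<phi> e x) = 0" for x
    using lin_indep_imp_finite[OF assms] ab by (simp add: sum.distrib)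
  then have "c a = 0" using lin_indepD[OF assms, of c] ab by simp
  then show False by (simp add: c_def)
qed

lemma lin_indep_iff_independent:
  assumes "finite I"
  shows "lin_indep \<phi> I \<longleftrightarrow> inj_on \<phi> I \<and> fun_space.independent (\<phi> ` I)"
proof
  assume ind: "lin_indep \<phi> I"
  show "inj_on \<phi> I \<and> fun_space.independent (\<phi> ` I)"
  proof
    show inj: "inj_on \<phi> I" using ind by (rule lin_indep_imp_inj_on)
    show "fun_space.independent (\<phi> ` I)"
    proof
      assume "fun_space.dependent (\<phi> ` I)"
      then obtain u where u: "\<exists>v\<in>\<phi> ` I. u v \<noteq> 0" "(\<Sum>v\<in>\<phi> ` I. scale_fun (u v) v) = 0"
        using assms by (auto simp: fun_space.dependent_finite)
      have "(\<Sum>e\<in>I. u (\<phi> e) * \<phi> e x) = 0" for x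
        using fun_cong[OF u(2), of x] by (simp add: sum.reindex[OF inj] sum_fun_apply)
      then have "\<forall>e\<in>I. u (\<phi> e) = 0" using lin_indepD[OF ind, of "\<lambda>e. u (\<phi> e)"] by blast
      with u(1) show False by blast
    qed
  qed
next
  assume "inj_on \<phi> I \<and> fun_space.independent (\<phi> ` I)"
  then have inj: "inj_on \<phi> I" and ind: "fun_space.independent (\<phi> ` I)" by auto
  show "lin_indep \<phi> I"
    unfolding lin_indep_def
  proof (intro allI impI ballI)
    fix c e assume rel: "\<forall>x. (\<Sum>e\<in>I. c e * \<phi> e x) = 0" and e: "e \<in> I"
    define u where "u = c \<circ> the_inv_into I \<phi>"
    have "(\<Sum>v\<in>\<phi> ` I. scale_fun (u v) v) = 0"
      using rel by (auto simp: sum.reindex[OF inj] sum_fun_apply u_def the_inv_into_f_f[OF inj])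
    then have "u (\<phi> e) = 0"
      using ind e assms by (auto simp: fun_space.dependent_finite)
    then show "c e = 0" by (simp add: u_def the_inv_into_f_f[OF inj e])
  qed
qed

lemma lin_indep_card_le_span:
  assumes "lin_indep \<phi> I" "finite B" "\<phi> ` I \<subseteq> fun_space.span B"
  shows "card I \<le> card B"
proof -
  have "inj_on \<phi> I" "fun_space.independent (\<phi> ` I)"
    using assms(1) lin_indep_iff_independent[OF lin_indep_imp_finite[OF assms(1)]] by blast+
  then show ?thesis
    using fun_space.independent_span_bound[OF assms(2) _ assms(3)] by (simp add: card_image)
qed

lemma matroid_lin_indep:
  assumes "finite E"
  shows "matroid E (\<lambda>I. I \<subseteq> E \<and> lin_indep \<phi> I)"
  unfolding matroid_def
proof (intro conjI allI impI; (elim conjE)?)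
  fix I J assume "J \<subseteq> E" "lin_indep \<phi> J" "I \<subseteq> J"
  then show "I \<subseteq> E" "lin_indep \<phi> I" using lin_indep_subset by blast+
next
  fix I J
  assume I: "I \<subseteq> E" "lin_indep \<phi> I" and J: "J \<subseteq> E" "lin_indep \<phi> J" and less: "card I < card J"
  have finI: "finite I" using I(2) by (rule lin_indep_imp_finite)
  show "\<exists>x\<in>J - I. insert x I \<subseteq> E \<and> lin_indep \<phi> (insert x I)"
  proof (rule ccontr)
    assume no: "\<not> ?thesis"
    have "\<phi> x \<in> fun_space.span (\<phi> ` I)" if "x \<in> J" for x
    proof (cases "\<phi> x \<in> \<phi> ` I")
      case False
      with no that I(1) J(1) have "\<not> lin_indep \<phi> (insert x I)" by auto
      with False I(2) finI show ?thesis
        by (auto simp: lin_indep_iff_independent fun_space.independent_insert)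
    qed (auto intro: fun_space.span_base)
    then have "card J \<le> card (\<phi> ` I)" using J(2) finI by (intro lin_indep_card_le_span) auto
    also have "\<dots> \<le> card I" using finI by (rule card_image_le)
    finally show False using less by simp
  qed
qed (use assms in \<open>auto simp: lin_indep_def\<close>)

lemma lin_indep_card_le_support:
  fixes w :: "'e \<Rightarrow> nat \<Rightarrow> real"
  assumes "lin_indep w I" "\<And>x i. x \<in> I \<Longrightarrow> t \<le> i \<Longrightarrow> w x i = 0"
  shows "card I \<le> t"
proof -
  have "w x \<in> fun_space.span ((\<lambda>k. indicator {k}) ` {..<t})" if "x \<in> I" for x
  proof -
    have "w x i = (\<Sum>k<t. scale_fun (w x k) (indicator {k})) i" for i
      using assms(2)[OF that, of i] by (cases "i < t") (auto simp: sum_fun_apply indicator_def)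
    then have expand: "w x = (\<Sum>k<t. scale_fun (w x k) (indicator {k}))" ..
    show ?thesis by (subst expand) (rule sum_scale_fun_in_span)
  qed
  then have "card I \<le> card ((\<lambda>k. indicator {k} :: nat \<Rightarrow> real) ` {..<t})"
    using assms(1) by (intro lin_indep_card_le_span) auto
  also have "\<dots> \<le> t" using card_image_le[of "{..<t}"] by simp
  finally show ?thesis .
qed

section \<open>Moment vectors and polynomials\<close>

definition moment :: "nat \<Rightarrow> real \<Rightarrow> nat \<Rightarrow> real" where
  "moment t s i = (if i < t then s ^ i else 0)"

definition pair_poly :: "nat \<Rightarrow> (nat \<Rightarrow> real) \<Rightarrow> real poly \<Rightarrow> real" where
  "pair_poly t w P = (\<Sum>i<t. w i * coeff P i)"

lemma pair_poly_moment:
  assumes "degree P < t"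
  shows "pair_poly t (moment t s) P = poly P s"
proof -
  have "poly P s = (\<Sum>i\<le>degree P. coeff P i * s ^ i)" by (rule poly_altdef)
  also have "\<dots> = (\<Sum>i<t. coeff P i * s ^ i)"
    using assms by (intro sum.mono_neutral_left) (auto simp: coeff_eq_0)
  finally show ?thesis by (simp add: pair_poly_def moment_def mult.commute)
qed

lemma pair_poly_add: "pair_poly t (u + v) P = pair_poly t u P + pair_poly t v P"
  by (simp add: pair_poly_def algebra_simps sum.distrib)

lemma pair_poly_lin_comb:
  assumes "\<And>i. (\<Sum>x\<in>X. c x * w x i) = 0"
  shows "(\<Sum>x\<in>X. c x * pair_poly t (w x) P) = 0"
proof -
  have "(\<Sum>x\<in>X. c x * pair_poly t (w x) P) = (\<Sum>i<t. coeff P i * (\<Sum>x\<in>X. c x * w x i))"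
    unfolding pair_poly_def
    by (simp add: sum_distrib_left sum_distrib_right sum.swap[of _ X] mult_ac)
  also have "\<dots> = 0" using assms by simp
  finally show ?thesis .
qed

definition node_poly :: "real set \<Rightarrow> real poly" where
  "node_poly R = (\<Prod>r\<in>R. [:- r, 1:])"

lemma degree_node_poly: "finite R \<Longrightarrow> degree (node_poly R) \<le> card R"
  unfolding node_poly_def using degree_prod_sum_le[of R "\<lambda>r. [:- r, 1:]"] by simp

lemma poly_node_poly: "poly (node_poly R) x = (\<Prod>r\<in>R. x - r)"
  by (simp add: node_poly_def poly_prod)

lemma poly_node_poly_eq_0_iff: "finite R \<Longrightarrow> poly (node_poly R) x = 0 \<longleftrightarrow> x \<in> R"
  by (simp add: poly_node_poly)

lemma lin_indep_moment:
  assumes "finite X" "card X \<le> t" "inj_on \<sigma> X"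
  shows "lin_indep (\<lambda>x. moment t (\<sigma> x)) X"
  unfolding lin_indep_def
proof (intro allI impI ballI)
  fix c x0 assume rel: "\<forall>i. (\<Sum>x\<in>X. c x * moment t (\<sigma> x) i) = 0" and x0: "x0 \<in> X"
  define P where "P = node_poly (\<sigma> ` (X - {x0}))"
  have "degree P \<le> card (X - {x0})"
    unfolding P_def using degree_node_poly[of "\<sigma> ` (X - {x0})"] card_image_le[of "X - {x0}" \<sigma>]
      assms(1) by simp
  also have "\<dots> < t" using card_Diff1_less[OF assms(1) x0] assms(2) by linarith
  finally have "degree P < t" .
  moreover have "(\<Sum>x\<in>X. c x * pair_poly t (moment t (\<sigma> x)) P) = 0"
    using rel by (intro pair_poly_lin_comb) blast
  ultimately have "(\<Sum>x\<in>X. c x * poly P (\<sigma> x)) = 0" by (simp add: pair_poly_moment)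
  moreover have "poly P (\<sigma> x) = 0" if "x \<in> X" "x \<noteq> x0" for x
    using that assms(1) by (simp add: P_def poly_node_poly_eq_0_iff)
  moreover have "poly P (\<sigma> x0) \<noteq> 0"
    using assms(1,3) x0 by (auto simp: P_def poly_node_poly_eq_0_iff inj_on_def)
  ultimately show "c x0 = 0"
    using sum_eq_0_single_term[OF assms(1) x0, of "\<lambda>x. c x * poly P (\<sigma> x)"] by auto
qed

section \<open>Symmetric products\<close>

definition sym_prod :: "(nat \<Rightarrow> real) \<Rightarrow> (nat \<Rightarrow> real) \<Rightarrow> nat \<times> nat \<Rightarrow> real" where
  "sym_prod u v = (\<lambda>(i, j). u i * v j + v i * u j)"

lemma sym_prod_commute: "sym_prod u v = sym_prod v u"
  by (auto simp: sym_prod_def fun_eq_iff)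

lemma sym_prod_eq_0D:
  assumes "a k \<noteq> 0" "sym_prod a z = 0"
  shows "z = 0"
proof
  fix j
  have "a k * z k + z k * a k = 0" using fun_cong[OF assms(2), of "(k, k)"] by (simp add: sym_prod_def)
  then have "z k = 0" using assms(1) by simp
  moreover have "a k * z j + z k * a j = 0" using fun_cong[OF assms(2), of "(k, j)"] by (simp add: sym_prod_def)
  ultimately show "z j = 0 j" using assms(1) by simp
qed

lemma sum_sym_prod_right:
  "(\<Sum>x\<in>X. c x * sym_prod a (z x) ij) = sym_prod a (\<lambda>j. \<Sum>x\<in>X. c x * z x j) ij"
  by (cases ij) (simp add: sym_prod_def sum.distrib sum_distrib_left algebra_simps)

lemma lin_indep_sym_prod_left:
  assumes "lin_indep z Y" "a k \<noteq> 0"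
  shows "lin_indep (\<lambda>x. sym_prod a (z x)) Y"
  unfolding lin_indep_def
proof (intro allI impI)
  fix c assume "\<forall>ij. (\<Sum>x\<in>Y. c x * sym_prod a (z x) ij) = 0"
  then have "sym_prod a (\<lambda>j. \<Sum>x\<in>Y. c x * z x j) = 0"
    by (simp add: sum_sym_prod_right fun_eq_iff)
  then have "(\<lambda>j. \<Sum>x\<in>Y. c x * z x j) = 0" by (rule sym_prod_eq_0D[where a = a and k = k, OF assms(2)])
  then show "\<forall>x\<in>Y. c x = 0" using lin_indepD[OF assms(1)] by (metis zero_fun_def)
qed

lemma sum_mult_indicator_singleton:
  "(\<Sum>j<t. f j * indicator {j} i) = (if i < t then f i else (0::real))" for t :: nat
  by (cases "i < t") (auto simp: indicator_def)

lemma sym_prod_in_span_right: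
  assumes "\<And>j. t \<le> j \<Longrightarrow> v j = 0"
  shows "sym_prod u v \<in> fun_space.span ((\<lambda>j. sym_prod u (indicator {j})) ` {..<t})"
proof -
  have "sym_prod u v ij = (\<Sum>j<t. scale_fun (v j) (sym_prod u (indicator {j}))) ij" for ij
  proof (cases ij)
    case (Pair a b)
    have "(\<Sum>j<t. scale_fun (v j) (sym_prod u (indicator {j}))) (a, b)
        = (\<Sum>j<t. v j * u a * indicator {j} b) + (\<Sum>j<t. v j * u b * indicator {j} a)"
      by (simp add: sum_fun_apply sym_prod_def sum.distrib algebra_simps)
    also have "\<dots> = (if b < t then v b * u a else 0) + (if a < t then v a * u b else 0)"
      by (simp only: sum_mult_indicator_singleton)
    also have "\<dots> = sym_prod u v (a, b)"
      using assms[of a] assms[of b] by (auto simp: sym_prod_def)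
    finally show ?thesis using Pair by simp
  qed
  then have expand: "sym_prod u v = (\<Sum>j<t. scale_fun (v j) (sym_prod u (indicator {j})))" ..
  show ?thesis by (subst expand) (rule sum_scale_fun_in_span)
qed

definition pair_poly2 :: "nat \<Rightarrow> real poly \<Rightarrow> real poly \<Rightarrow> (nat \<times> nat \<Rightarrow> real) \<Rightarrow> real" where
  "pair_poly2 t P Q M = (\<Sum>i<t. \<Sum>j<t. coeff P i * coeff Q j * M (i, j))"

lemma pair_poly2_sym_prod:
  "pair_poly2 t P Q (sym_prod u v) = pair_poly t u P * pair_poly t v Q + pair_poly t v P * pair_poly t u Q"
  unfolding pair_poly2_def sym_prod_def pair_poly_def
  by (simp add: algebra_simps sum.distrib sum_distrib_left sum_distrib_right sum_product)
    (rule sum.swap)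

lemma pair_poly2_lin_comb:
  assumes "\<And>ij. (\<Sum>e\<in>I. c e * \<phi> e ij) = 0"
  shows "(\<Sum>e\<in>I. c e * pair_poly2 t P Q (\<phi> e)) = 0"
proof -
  have "(\<Sum>e\<in>I. c e * pair_poly2 t P Q (\<phi> e))
      = (\<Sum>i<t. \<Sum>j<t. coeff P i * coeff Q j * (\<Sum>e\<in>I. c e * \<phi> e (i, j)))"
    unfolding pair_poly2_def by (simp add: sum_distrib_left sum.swap[of _ I] mult_ac)
  also have "\<dots> = 0" by (simp add: assms)
  finally show ?thesis .
qed

lemma coeff_eq_0_by_pair_poly2:
  assumes "finite I" "\<And>ij. (\<Sum>e\<in>I. c e * \<phi> e ij) = 0" "e0 \<in> I"
    and "pair_poly2 t P Q (\<phi> e0) \<noteq> 0"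
    and "\<And>e. e \<in> I \<Longrightarrow> e \<noteq> e0 \<Longrightarrow> c e * pair_poly2 t P Q (\<phi> e) = 0"
  shows "c e0 = 0"
proof -
  have "(\<Sum>e\<in>I. c e * pair_poly2 t P Q (\<phi> e)) = 0"
    using assms(2) by (rule pair_poly2_lin_comb)
  then have "c e0 * pair_poly2 t P Q (\<phi> e0) = 0"
    using assms(5) by (rule sum_eq_0_single_term[OF assms(1,3)])
  with assms(4) show ?thesis by simp
qed

definition edge_case :: "('a \<Rightarrow> 'a \<Rightarrow> 'c) \<Rightarrow> 'a set \<Rightarrow> 'c" where
  "edge_case f e = (case SOME (u, v). e = {u, v} of (u, v) \<Rightarrow> f u v)"

lemma edge_case_doubleton:
  assumes "\<And>u v. f u v = f v u"
  shows "edge_case f {a, b} = f a b"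
proof -
  define uv where "uv = (SOME (u, v). {a, b} = {u, v})"
  have "(\<lambda>(u, v). {a, b} = {u, v}) uv"
    unfolding uv_def by (rule someI[of _ "(a, b)"]) simp
  then have "(fst uv = a \<and> snd uv = b) \<or> (fst uv = b \<and> snd uv = a)"
    by (cases uv) (auto simp: doubleton_eq_iff)
  then show ?thesis
    unfolding edge_case_def uv_def[symmetric] using assms by (cases uv) auto
qed

lemma loop_edges_image: "loop_edges S = (\<lambda>(u, v). {u, v}) ` (S \<times> S)"
  by (auto simp: loop_edges_def)

lemma finite_loop_edges: "finite S \<Longrightarrow> finite (loop_edges S)"
  by (simp add: loop_edges_image)

lemma doubleton_in_loop_edges: "u \<in> S \<Longrightarrow> v \<in> S \<Longrightarrow> {u, v} \<in> loop_edges S"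
  by (auto simp: loop_edges_def)

lemma singleton_in_loop_edges: "x \<in> S \<Longrightarrow> {x} \<in> loop_edges S"
  using doubleton_in_loop_edges[of x S x] by simp

lemma loop_edges_cases:
  assumes "e \<in> loop_edges S"
  obtains u v where "u \<in> S" "v \<in> S" "e = {u, v}"
  using assms by (auto simp: loop_edges_def)

lemma star_image: "star v X = (\<lambda>x. {v, x}) ` X"
  by (auto simp: star_def)

lemma inj_on_insert_doubleton: "inj_on (\<lambda>x. {v, x}) X"
  by (auto simp: inj_on_def doubleton_eq_iff)

lemma card_star: "card (star v X) = card X"
  by (simp add: star_image card_image[OF inj_on_insert_doubleton])

lemma star_subset_loop_edges: "v \<in> S \<Longrightarrow> X \<subseteq> S \<Longrightarrow> star v X \<subseteq> loop_edges S"
  by (auto simp: star_def loop_edges_def)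

lemma loop_edges_insert: "loop_edges (insert x S) = loop_edges S \<union> star x (insert x S)"
  by (auto simp: loop_edges_def star_def)

lemma loop_edges_disjoint_star:
  "x \<notin> S \<Longrightarrow> loop_edges S \<inter> star x X = {}"
  by (auto simp: loop_edges_def star_def doubleton_eq_iff)

lemma loop_edges_disjoint: "A \<inter> B = {} \<Longrightarrow> loop_edges A \<inter> loop_edges B = {}"
  by (auto simp: loop_edges_def doubleton_eq_iff)

lemma card_loop_edges: "finite S \<Longrightarrow> card (loop_edges S) = (card S + 1) choose 2"
proof (induction S rule: finite_induct)
  case empty
  then show ?case by (simp add: loop_edges_def)
next
  case (insert x S)
  have "card (loop_edges (insert x S)) = card (loop_edges S) + card (star x (insert x S))"
    unfolding loop_edges_insert
    by (rule card_Un_disjoint[OF _ _ loop_edges_disjoint_star[OF insert(2)]])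
      (use insert(1) in \<open>simp_all add: finite_loop_edges star_image\<close>)
  also have "\<dots> = ((card S + 1) choose 2) + (card S + 1)"
    using insert by (simp add: card_star)
  also have "\<dots> = (card (insert x S) + 1) choose 2"
    using insert(1,2) by (simp add: numeral_2_eq_2)
  finally show ?case .
qed

lemma sym_prod_in_span:
  assumes "\<And>i. t \<le> i \<Longrightarrow> u i = 0" "\<And>j. t \<le> j \<Longrightarrow> v j = 0"
  shows "sym_prod u v \<in> fun_space.span
    (edge_case (\<lambda>i j. sym_prod (indicator {i}) (indicator {j})) ` loop_edges {..<t})"
    (is "_ \<in> fun_space.span ?B")
proof -
  have "sym_prod (indicator {j}) u \<in> fun_space.span ?B" if "j < t" for j
  proof -
    have "sym_prod (indicator {j}) (indicator {i}) \<in> ?B" if "i < t" for i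
      using \<open>j < t\<close> that doubleton_in_loop_edges[of j "{..<t}" i]
      by (force simp: edge_case_doubleton sym_prod_commute)
    then have "(\<lambda>i. sym_prod (indicator {j}) (indicator {i})) ` {..<t} \<subseteq> fun_space.span ?B"
      by (auto intro: fun_space.span_base)
    moreover have "sym_prod (indicator {j}) u
        \<in> fun_space.span ((\<lambda>i. sym_prod (indicator {j}) (indicator {i})) ` {..<t})"
      using assms(1) by (rule sym_prod_in_span_right)
    ultimately show ?thesis using span_trans by blast
  qed
  then have "(\<lambda>j. sym_prod u (indicator {j})) ` {..<t} \<subseteq> fun_space.span ?B"
    by (auto simp: sym_prod_commute)
  moreover have "sym_prod u v \<in> fun_space.span ((\<lambda>j. sym_prod u (indicator {j})) ` {..<t})"
    using assms(2) by (rule sym_prod_in_span_right)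
  ultimately show ?thesis using span_trans by blast
qed

section \<open>Dependencies in the generic second symmetric power\<close>

lemma sym_mat_doubleton: "sym_mat p {a, b} i j = p a i * p b j + p b i * p a j"
proof -
  have "sym_mat p e i j = edge_case (\<lambda>u v. p u i * p v j + p v i * p u j) e" for e
    by (simp add: sym_mat_def edge_case_def)
  then show ?thesis by (simp add: edge_case_doubleton algebra_simps)
qed

lemma sym_lin_indepD:
  assumes "sym_lin_indep t p F" "\<And>i j. i < t \<Longrightarrow> j < t \<Longrightarrow> (\<Sum>e\<in>F. c e * sym_mat p e i j) = 0"
    "e \<in> F"
  shows "c e = 0"
  using assms unfolding sym_lin_indep_def by blast

definition clique_coeff :: "'x set \<Rightarrow> ('x \<Rightarrow> real) \<Rightarrow> ('x \<Rightarrow> real) \<Rightarrow> 'x set \<Rightarrow> real" where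
  "clique_coeff S \<alpha> \<beta> e = (\<Sum>(a, b)\<in>{(a, b) \<in> S \<times> S. {a, b} = e}. \<alpha> a * \<beta> b)"

lemma clique_coeff_singleton: "x \<in> S \<Longrightarrow> clique_coeff S \<alpha> \<beta> {x} = \<alpha> x * \<beta> x"
proof -
  assume "x \<in> S"
  then have "{(a, b) \<in> S \<times> S. {a, b} = {x}} = {(x, x)}" by (auto simp: doubleton_eq_iff)
  then show ?thesis by (simp add: clique_coeff_def)
qed

lemma sum_clique_coeff_sym_mat:
  assumes "finite S"
  shows "(\<Sum>e\<in>loop_edges S. clique_coeff S \<alpha> \<beta> e * sym_mat p e i j)
       = (\<Sum>a\<in>S. \<alpha> a * p a i) * (\<Sum>b\<in>S. \<beta> b * p b j) + (\<Sum>b\<in>S. \<beta> b * p b i) * (\<Sum>a\<in>S. \<alpha> a * p a j)"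
proof -
  let ?h = "\<lambda>(a, b). \<alpha> a * \<beta> b * sym_mat p {a, b} i j"
  have "(\<Sum>e\<in>loop_edges S. clique_coeff S \<alpha> \<beta> e * sym_mat p e i j)
      = (\<Sum>e\<in>(\<lambda>(a, b). {a, b}) ` (S \<times> S). \<Sum>ab\<in>{ab \<in> S \<times> S. (\<lambda>(a, b). {a, b}) ab = e}. ?h ab)"
    unfolding loop_edges_image clique_coeff_def sum_distrib_right
    by (rule sum.cong) (auto intro!: sum.cong)
  also have "\<dots> = (\<Sum>ab\<in>S \<times> S. ?h ab)"
    using assms by (intro sum.image_gen[symmetric]) simp
  also have "\<dots> = (\<Sum>a\<in>S. \<Sum>b\<in>S. \<alpha> a * p a i * (\<beta> b * p b j) + \<alpha> a * p a j * (\<beta> b * p b i))"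
    by (simp add: sum.cartesian_product sym_mat_doubleton algebra_simps)
  also have "\<dots> = (\<Sum>a\<in>S. \<alpha> a * p a i) * (\<Sum>b\<in>S. \<beta> b * p b j) + (\<Sum>a\<in>S. \<alpha> a * p a j) * (\<Sum>b\<in>S. \<beta> b * p b i)"
    by (simp add: sum.distrib sum_product)
  finally show ?thesis by (simp only: mult.commute)
qed

lemma not_sym_lin_indep_clique:
  assumes "finite F" "finite S" "loop_edges S \<subseteq> F" "x \<in> S" "\<alpha> x \<noteq> 0"
    and "\<And>i. i < t \<Longrightarrow> (\<Sum>a\<in>S. \<alpha> a * p a i) = 0"
  shows "\<not> sym_lin_indep t p F"
proof
  assume ind: "sym_lin_indep t p F"
  define \<gamma> where "\<gamma> b = (if b = x then 1 else 0 :: real)" for b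
  define c where "c e = (if e \<in> loop_edges S then clique_coeff S \<alpha> \<gamma> e else 0)" for e
  have "(\<Sum>e\<in>F. c e * sym_mat p e i j) = 0" if "i < t" "j < t" for i j
  proof -
    have "(\<Sum>e\<in>F. c e * sym_mat p e i j) = (\<Sum>e\<in>loop_edges S. clique_coeff S \<alpha> \<gamma> e * sym_mat p e i j)"
      using assms(1,3) by (intro sum.mono_neutral_cong_right) (auto simp: c_def)
    also have "\<dots> = 0" using that assms(6) by (simp add: sum_clique_coeff_sym_mat[OF assms(2)])
    finally show ?thesis .
  qed
  then have "c {x} = 0"
    using sym_lin_indepD[OF ind] assms(3) singleton_in_loop_edges[OF assms(4)] by blast
  moreover have "c {x} = \<alpha> x"
    using assms(4) by (simp add: c_def clique_coeff_singleton singleton_in_loop_edges \<gamma>_def)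
  ultimately show False using assms(5) by simp
qed

lemma not_sym_lin_indep_opposite_cliques:
  assumes "finite A" "finite B" "A \<inter> B = {}" "x \<in> A" "\<alpha> x \<noteq> 0"
    and opposite: "\<And>i. i < t \<Longrightarrow> (\<Sum>b\<in>B. \<alpha> b * p b i) = - (\<Sum>a\<in>A. \<alpha> a * p a i)"
  shows "\<not> sym_lin_indep t p (loop_edges A \<union> loop_edges B)"
proof
  let ?F = "loop_edges A \<union> loop_edges B"
  assume ind: "sym_lin_indep t p ?F"
  have disj: "loop_edges A \<inter> loop_edges B = {}" using assms(3) by (rule loop_edges_disjoint)
  \<comment> \<open>both cliques produce the symmetric square of the same vector, with opposite signs\<close>
  define c where
    "c e = (if e \<in> loop_edges A then clique_coeff A \<alpha> \<alpha> e else - clique_coeff B \<alpha> \<alpha> e)" for e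
  have "(\<Sum>e\<in>?F. c e * sym_mat p e i j) = 0" if "i < t" "j < t" for i j
  proof -
    have "(\<Sum>e\<in>?F. c e * sym_mat p e i j)
        = (\<Sum>e\<in>loop_edges A. c e * sym_mat p e i j) + (\<Sum>e\<in>loop_edges B. c e * sym_mat p e i j)"
      using assms(1,2) disj by (simp add: sum.union_disjoint finite_loop_edges)
    also have "\<dots> = (\<Sum>e\<in>loop_edges A. clique_coeff A \<alpha> \<alpha> e * sym_mat p e i j)
        - (\<Sum>e\<in>loop_edges B. clique_coeff B \<alpha> \<alpha> e * sym_mat p e i j)"
      using disj by (auto simp: c_def sum_negf[symmetric] intro!: sum.cong arg_cong2[where f = "(-)"])
    also have "\<dots> = 0"
      using that by (simp add: sum_clique_coeff_sym_mat assms(1,2) opposite)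
    finally show ?thesis .
  qed
  then have "c {x} = 0"
    using sym_lin_indepD[OF ind] singleton_in_loop_edges[OF assms(4)] by blast
  moreover have "c {x} = \<alpha> x * \<alpha> x"
    using assms(4) by (simp add: c_def clique_coeff_singleton singleton_in_loop_edges)
  ultimately show False using assms(5) by simp
qed

lemma not_sym_lin_indep_two_cliques:
  assumes "finite A" "finite B" "A \<inter> B = {}" "t < card A + card B"
  shows "\<not> sym_lin_indep t p (loop_edges A \<union> loop_edges B)"
proof -
  have finF: "finite (loop_edges A \<union> loop_edges B)" using assms(1,2) by (simp add: finite_loop_edges)
  define w where "w x i = (if i < t then p x i else 0)" for x i
  have "\<not> lin_indep w (A \<union> B)"
    using lin_indep_card_le_support[of w "A \<union> B" t] assms by (auto simp: w_def card_Un_disjoint)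
  then obtain \<alpha> where rel: "\<And>i. (\<Sum>x\<in>A \<union> B. \<alpha> x * w x i) = 0" and nz: "\<exists>x\<in>A \<union> B. \<alpha> x \<noteq> 0"
    by (auto simp: lin_indep_def)
  have opposite: "(\<Sum>b\<in>B. \<alpha> b * p b i) = - (\<Sum>a\<in>A. \<alpha> a * p a i)" if "i < t" for i
    using rel[of i] that assms(1-3) by (simp add: w_def sum.union_disjoint eq_neg_iff_add_eq_0 add.commute)
  show ?thesis
  proof (cases "\<forall>i<t. (\<Sum>a\<in>A. \<alpha> a * p a i) = 0")
    case True
    with opposite have "\<forall>i<t. (\<Sum>b\<in>B. \<alpha> b * p b i) = 0" by simp
    with True nz show ?thesis
      using not_sym_lin_indep_clique[OF finF assms(1), of _ \<alpha> t p]
        not_sym_lin_indep_clique[OF finF assms(2), of _ \<alpha> t p] by blast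
  next
    case False
    then obtain k where "(\<Sum>a\<in>A. \<alpha> a * p a k) \<noteq> 0" by blast
    then obtain x where "x \<in> A" "\<alpha> x * p x k \<noteq> 0"
      using sum.neutral[of A "\<lambda>a. \<alpha> a * p a k"] by blast
    then show ?thesis
      using not_sym_lin_indep_opposite_cliques[OF assms(1-3), of x \<alpha> t p] opposite by simp
  qed
qed

lemma mrank_eqI:
  assumes "finite X" "\<And>I. I \<subseteq> X \<Longrightarrow> indep I \<Longrightarrow> card I \<le> k"
    and "J \<subseteq> X" "indep J" "card J = k"
  shows "mrank indep X = k"
  unfolding mrank_def
proof (rule Max_eqI)
  show "finite (card ` {I. I \<subseteq> X \<and> indep I})"
    using assms(1) by (auto intro: finite_subset[of _ "Pow X"])
qed (use assms in auto)

lemma mrank_uniform_indep: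
  assumes "finite V" "X \<subseteq> V"
  shows "mrank (uniform_indep V t) X = min (card X) t"
proof -
  have "finite X" using assms finite_subset by blast
  moreover obtain Y where "Y \<subseteq> X" "card Y = min (card X) t"
    using obtain_subset_with_card_n[of "min (card X) t" X] by auto
  ultimately show ?thesis
    using assms(2) by (intro mrank_eqI[of X _ _ Y]) (auto simp: uniform_indep_def card_mono)
qed

lemma ex_maximal_weak_le_above:
  assumes "finite E" "P N" "\<And>N I. P N \<Longrightarrow> N I \<Longrightarrow> I \<subseteq> E"
  shows "\<exists>M. P M \<and> weak_le N M \<and> (\<forall>M'. P M' \<and> weak_le M M' \<longrightarrow> M' = M)"
proof -
  have weak_le_iff: "weak_le = (\<le>)" by (auto simp: weak_le_def le_fun_def fun_eq_iff)
  have "{N. P N} \<subseteq> (\<lambda>A I. I \<in> A) ` Pow (Pow E)"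
  proof
    fix M assume "M \<in> {N. P N}"
    then have "M = (\<lambda>I. I \<in> {I. M I})" "{I. M I} \<in> Pow (Pow E)" using assms(3) by auto
    then show "M \<in> (\<lambda>A I. I \<in> A) ` Pow (Pow E)" by blast
  qed
  then have "finite {N. P N}" using assms(1) by (meson finite_Pow_iff finite_imageI finite_subset)
  from finite_has_maximal2[OF this, of N] assms(2) show ?thesis by (auto simp: weak_le_iff)
qed

section \<open>A second symmetric power of \<open>U\<^sub>n\<^sup>t\<close> not below the generic one\<close>

lemma adjacent_nat_product_pos:
  assumes "m = Suc m' \<or> m' = Suc m" "n \<noteq> m" "n \<noteq> m'"
  shows "(real m - real n) * (real m' - real n) > 0"
proof (cases "n < m")
  case True
  with assms have "n < m'" by auto
  with True show ?thesis by (simp add: mult_pos_pos)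
next
  case False
  with assms have "m' < n" "m < n" by auto
  then show ?thesis by (simp add: mult_neg_neg)
qed

text \<open>The assumption \<open>4 \<le> t\<close> makes room for the cubic test polynomials in
  \<open>lin_indep_two_cliques\<close>.\<close>

locale moment_construction =
  fixes V :: "'a set" and t :: nat and g :: "'a \<Rightarrow> nat"
  assumes finite_V: "finite V"
    and bij_g: "bij_betw g V {..<card V}"
    and four_le_t: "4 \<le> t"
    and t_less_card: "t < card V"
begin

definition vertex :: "nat \<Rightarrow> 'a" where
  "vertex = the_inv_into V g"

lemma inj_g: "inj_on g V"
  using bij_g by (simp add: bij_betw_def)

lemma vertex:
  assumes "i < card V"
  shows "vertex i \<in> V" "g (vertex i) = i"
  using assms bij_g unfolding vertex_def bij_betw_def
  by (auto intro: the_inv_into_into f_the_inv_into_f)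

definition s :: "'a \<Rightarrow> real" where
  "s x = real (g x)"

definition tau :: "'a \<Rightarrow> real" where
  "tau x = - 1 - s x"

lemma inj_s: "inj_on s V"
  using inj_g by (auto simp: inj_on_def s_def)

lemma tau_neq_s: "tau x \<noteq> s z"
  by (simp add: tau_def s_def)

definition q :: "'a \<Rightarrow> nat \<Rightarrow> real" where
  "q x = moment t (s x)"

definition low :: "'a set" where
  "low = {x \<in> V. g x < t - 1}"

definition partner :: "'a \<Rightarrow> 'a" where
  "partner x = vertex (if g x = 0 then 1 else g x - 1)"

definition y :: "'a \<Rightarrow> nat \<Rightarrow> real" where
  "y x = (if x \<in> low then q x + q (partner x) else moment t (tau x))"

definition star_vec :: "'a \<Rightarrow> 'a \<Rightarrow> nat \<Rightarrow> real" where
  "star_vec v x = (if x = v then y v else q x)"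

definition edge_vec :: "'a set \<Rightarrow> nat \<times> nat \<Rightarrow> real" where
  "edge_vec = edge_case (\<lambda>u v. sym_prod (q u) (star_vec u v))"

definition indep :: "'a set set \<Rightarrow> bool" where
  "indep I \<longleftrightarrow> I \<subseteq> loop_edges V \<and> lin_indep edge_vec I"

lemma low_subset: "low \<subseteq> V"
  by (auto simp: low_def)

lemma finite_low: "finite low"
  using low_subset finite_V by (rule finite_subset)

lemma card_low: "card low = t - 1"
proof -
  have "g ` low = {..<t - 1}"
  proof
    show "{..<t - 1} \<subseteq> g ` low"
    proof
      fix i assume "i \<in> {..<t - 1}"
      then have "vertex i \<in> low" "g (vertex i) = i"
        using vertex[of i] t_less_card by (auto simp: low_def)
      then show "i \<in> g ` low" by force
    qed
  qed (auto simp: low_def)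
  then show ?thesis
    using card_image[OF inj_on_subset[OF inj_g low_subset]] by simp
qed

lemma partner:
  assumes "x \<in> low"
  shows "partner x \<in> low" "partner x \<noteq> x" "g x = Suc (g (partner x)) \<or> g (partner x) = Suc (g x)"
proof -
  have "(if g x = 0 then 1 else g x - 1) < t - 1" using assms four_le_t by (auto simp: low_def)
  then have "partner x \<in> V" "g (partner x) = (if g x = 0 then 1 else g x - 1)"
    unfolding partner_def using vertex t_less_card by auto
  then show "partner x \<in> low" "g x = Suc (g (partner x)) \<or> g (partner x) = Suc (g x)"
    using assms four_le_t by (auto simp: low_def)
  then show "partner x \<noteq> x" by auto
qed

lemma edge_vec_doubleton: "edge_vec {u, v} = sym_prod (q u) (star_vec u v)"
  unfolding edge_vec_def by (rule edge_case_doubleton) (auto simp: star_vec_def sym_prod_commute)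

lemma edge_vec_loop: "edge_vec {x} = sym_prod (q x) (y x)"
  using edge_vec_doubleton[of x x] by (simp add: star_vec_def)

lemma edge_vec_edge: "x \<noteq> z \<Longrightarrow> edge_vec {x, z} = sym_prod (q x) (q z)"
  by (simp add: edge_vec_doubleton star_vec_def)

lemma q_vanishes: "t \<le> i \<Longrightarrow> q x i = 0"
  by (simp add: q_def moment_def)

lemma star_vec_vanishes: "t \<le> i \<Longrightarrow> star_vec v x i = 0"
  by (simp add: star_vec_def y_def q_vanishes moment_def)

lemma pair_q: "degree P < t \<Longrightarrow> pair_poly t (q x) P = poly P (s x)"
  by (simp add: q_def pair_poly_moment)

lemma pair_y_low:
  "degree P < t \<Longrightarrow> x \<in> low \<Longrightarrow> pair_poly t (y x) P = poly P (s x) + poly P (s (partner x))"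
  by (simp add: y_def pair_poly_add pair_q)

lemma pair_y_high: "degree P < t \<Longrightarrow> x \<notin> low \<Longrightarrow> pair_poly t (y x) P = poly P (tau x)"
  by (simp add: y_def pair_poly_moment)

lemma pair2_edge:
  assumes "degree P < t" "degree Q < t" "x \<noteq> z"
  shows "pair_poly2 t P Q (edge_vec {x, z}) = poly P (s x) * poly Q (s z) + poly P (s z) * poly Q (s x)"
  using assms by (simp add: edge_vec_edge pair_poly2_sym_prod pair_q)

lemma pair2_loop:
  assumes "degree P < t" "degree Q < t"
  shows "pair_poly2 t P Q (edge_vec {x}) = poly P (s x) * pair_poly t (y x) Q + pair_poly t (y x) P * poly Q (s x)"
  using assms by (simp add: edge_vec_loop pair_poly2_sym_prod pair_q)

lemma degree_node_poly_s: "finite X \<Longrightarrow> degree (node_poly (s ` X)) \<le> card X"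
  using degree_node_poly[of "s ` X"] card_image_le[of X s] by simp

lemma poly_node_poly_s_eq_0_iff:
  assumes "X \<subseteq> V" "x \<in> V"
  shows "poly (node_poly (s ` X)) (s x) = 0 \<longleftrightarrow> x \<in> X"
  using assms finite_subset[OF assms(1) finite_V] inj_s
  by (auto simp: poly_node_poly_eq_0_iff inj_on_def)

lemma poly_node_poly_s_tau: "X \<subseteq> V \<Longrightarrow> poly (node_poly (s ` X)) (tau x) \<noteq> 0"
  using finite_subset[OF _ finite_V] tau_neq_s by (auto simp: poly_node_poly_eq_0_iff)

lemma lin_indep_q: "Y \<subseteq> V \<Longrightarrow> card Y \<le> t \<Longrightarrow> lin_indep q Y"
  using lin_indep_moment[of Y t s] inj_on_subset[OF inj_s] finite_subset[OF _ finite_V]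
  by (simp add: q_def[abs_def])

text \<open>The nodes \<open>s v\<close> and \<open>s (partner v)\<close> are adjacent integers, so no node lies strictly
  between them.\<close>

lemma node_poly_at_partner_pos:
  assumes "v \<in> low" "X \<subseteq> V" "v \<notin> X" "partner v \<notin> X"
  shows "poly (node_poly (s ` X)) (s v) * poly (node_poly (s ` X)) (s (partner v)) > 0"
proof -
  have "poly (node_poly (s ` X)) (s v) * poly (node_poly (s ` X)) (s (partner v))
      = (\<Prod>r\<in>s ` X. (s v - r) * (s (partner v) - r))"
    by (simp add: poly_node_poly prod.distrib)
  also have "\<dots> > 0"
  proof (rule prod_pos)
    fix r assume "r \<in> s ` X"
    then obtain z where z: "z \<in> X" "r = s z" by auto
    have "v \<in> V" "partner v \<in> V" using assms(1) partner(1) low_subset by auto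
    with z(1) assms(2-4) inj_g have "g z \<noteq> g v" "g z \<noteq> g (partner v)"
      by (auto simp: inj_on_def)
    then show "(s v - r) * (s (partner v) - r) > 0"
      using adjacent_nat_product_pos partner(3)[OF assms(1)] z(2) by (auto simp: s_def)
  qed
  finally show ?thesis .
qed

lemma lin_indep_star_vec_partner_missing:
  assumes v: "v \<in> low" "v \<in> Y" "partner v \<notin> Y" and Y: "Y \<subseteq> V" "card Y \<le> t"
  shows "lin_indep (star_vec v) Y"
proof -
  have finY: "finite Y" using Y(1) finite_V by (rule finite_subset)
  have "lin_indep (star_vec v) ((Y - {v}) \<union> {v})"
  proof (rule lin_indep_Un)
    show "lin_indep (star_vec v) (Y - {v})"
      using lin_indep_subset[OF lin_indep_q[OF Y]] by (subst lin_indep_cong[where \<psi> = q]) (auto simp: star_vec_def)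
  next
    fix c assume rel: "\<And>i. (\<Sum>x\<in>(Y - {v}) \<union> {v}. c x * star_vec v x i) = 0"
    define P where "P = node_poly (s ` (Y - {v}))"
    have "degree P \<le> card (Y - {v})" unfolding P_def using finY by (intro degree_node_poly_s) simp
    also have "\<dots> < t" using card_Diff1_less[OF finY v(2)] Y(2) by linarith
    finally have degP: "degree P < t" .
    have "(\<Sum>x\<in>(Y - {v}) \<union> {v}. c x * pair_poly t (star_vec v x) P) = 0"
      using rel by (rule pair_poly_lin_comb)
    moreover have "poly P (s x) = 0" if "x \<in> Y - {v}" for x
      using that finY by (simp add: P_def poly_node_poly_eq_0_iff)
    ultimately have "c v * pair_poly t (star_vec v v) P = 0"
      using finY degP by (subst (asm) sum.union_disjoint) (auto simp: star_vec_def pair_q)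
    then have "c v * (poly P (s v) + poly P (s (partner v))) = 0"
      using degP v(1) by (simp add: star_vec_def pair_y_low)
    moreover have "poly P (s v) * poly P (s (partner v)) > 0"
      unfolding P_def using v Y(1) by (intro node_poly_at_partner_pos) auto
    ultimately show "\<forall>x\<in>{v}. c x = 0" by (auto simp: add_eq_0_iff)
  qed (use finY in auto)
  with v(2) show ?thesis by (simp add: insert_absorb)
qed

lemma lin_indep_star_vec:
  assumes Y: "Y \<subseteq> V" "card Y \<le> t"
  shows "lin_indep (star_vec v) Y"
proof -
  consider "v \<notin> Y" | "v \<in> Y" "v \<notin> low" | "v \<in> Y" "v \<in> low" "partner v \<in> Y"
    | "v \<in> Y" "v \<in> low" "partner v \<notin> Y"
    by blast
  then show ?thesis
  proof cases
    case 1
    then show ?thesis using lin_indep_q[OF Y] by (subst lin_indep_cong[where \<psi> = q]) (auto simp: star_vec_def)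
  next
    case 2
    have "inj_on (s(v := tau v)) Y"
      using inj_on_subset[OF inj_s Y(1)] by (auto simp: inj_on_def tau_neq_s tau_neq_s[symmetric])
    then have "lin_indep (\<lambda>x. moment t ((s(v := tau v)) x)) Y"
      using finite_subset[OF Y(1) finite_V] Y(2) by (intro lin_indep_moment)
    then show ?thesis
      using 2 by (subst lin_indep_cong) (auto simp: star_vec_def y_def q_def)
  next
    case 3
    then have "lin_indep (q(v := q v + q (partner v))) Y"
      using lin_indep_q[OF Y] partner(2)[OF 3(2), symmetric] by (intro lin_indep_add_column) auto
    then show ?thesis
      using 3 by (subst lin_indep_cong) (auto simp: star_vec_def y_def)
  next
    case 4
    then show ?thesis using Y by (intro lin_indep_star_vec_partner_missing)
  qed
qed

lemma lin_indep_star: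
  assumes "Y \<subseteq> V" "card Y \<le> t"
  shows "lin_indep edge_vec (star v Y)"
proof -
  have "q v 0 \<noteq> 0" using four_le_t by (simp add: q_def moment_def)
  with lin_indep_star_vec[OF assms] have "lin_indep (\<lambda>x. sym_prod (q v) (star_vec v x)) Y"
    by (rule lin_indep_sym_prod_left)
  then show ?thesis
    by (simp add: star_image lin_indep_image[OF inj_on_insert_doubleton] edge_vec_doubleton)
qed

lemma lin_indep_star_card_le:
  assumes "I \<subseteq> star v X" "lin_indep edge_vec I"
  shows "card I \<le> t"
proof -
  have "edge_vec e \<in> fun_space.span ((\<lambda>j. sym_prod (q v) (indicator {j})) ` {..<t})" if "e \<in> I" for e
  proof -
    obtain x where "e = {v, x}" using assms(1) \<open>e \<in> I\<close> by (auto simp: star_def)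
    then show ?thesis by (simp add: edge_vec_doubleton sym_prod_in_span_right star_vec_vanishes)
  qed
  then have "card I \<le> card ((\<lambda>j. sym_prod (q v) (indicator {j})) ` {..<t})"
    using assms(2) by (intro lin_indep_card_le_span) auto
  also have "\<dots> \<le> t" using card_image_le[of "{..<t}"] by simp
  finally show ?thesis .
qed

lemma mrank_star:
  assumes "v \<in> V" "X \<subseteq> V"
  shows "mrank indep (star v X) = min (card X) t"
proof -
  have finX: "finite X" using assms(2) finite_V by (rule finite_subset)
  obtain Y where Y: "Y \<subseteq> X" "card Y = min (card X) t"
    using obtain_subset_with_card_n[of "min (card X) t" X] by auto
  show ?thesis
  proof (rule mrank_eqI[where J = "star v Y"])
    show "finite (star v X)" using finX by (simp add: star_image)
    show "star v Y \<subseteq> star v X" using Y by (auto simp: star_def)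
    show "card (star v Y) = min (card X) t" using Y by (simp add: card_star)
    show "indep (star v Y)"
      using assms Y lin_indep_star[where v = v and Y = Y] star_subset_loop_edges[of v V Y]
      by (auto simp: indep_def)
    fix I assume "I \<subseteq> star v X" "indep I"
    then have "card I \<le> card (star v X)" "card I \<le> t"
      using finX lin_indep_star_card_le[of I v X] by (auto simp: indep_def star_image intro: card_mono)
    then show "card I \<le> min (card X) t" by (simp add: card_star)
  qed
qed

lemma indep_card_le: "indep I \<Longrightarrow> card I \<le> (t + 1) choose 2"
proof -
  let ?B = "edge_case (\<lambda>i j. sym_prod (indicator {i}) (indicator {j})) ` loop_edges {..<t}"
  assume I: "indep I"
  have "edge_vec e \<in> fun_space.span ?B" if "e \<in> I" for e
  proof -
    obtain u v where "e = {u, v}" using I \<open>e \<in> I\<close> by (auto simp: indep_def loop_edges_def)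
    then show ?thesis by (simp add: edge_vec_doubleton sym_prod_in_span q_vanishes star_vec_vanishes)
  qed
  then have "card I \<le> card ?B"
    using I by (intro lin_indep_card_le_span) (auto simp: indep_def finite_loop_edges)
  also have "\<dots> \<le> card (loop_edges {..<t})" by (intro card_image_le finite_loop_edges) simp
  finally show ?thesis by (simp add: card_loop_edges)
qed

lemma matroid_indep: "matroid (loop_edges V) indep"
proof -
  have "indep = (\<lambda>I. I \<subseteq> loop_edges V \<and> lin_indep edge_vec I)" by (simp add: fun_eq_iff indep_def)
  then show ?thesis using matroid_lin_indep[OF finite_loop_edges[OF finite_V]] by simp
qed

definition v\<^sub>1 :: 'a where
  "v\<^sub>1 = vertex (t - 1)"

definition v\<^sub>2 :: 'a where
  "v\<^sub>2 = vertex t"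

lemma v\<^sub>1_v\<^sub>2: "v\<^sub>1 \<in> V" "v\<^sub>2 \<in> V" "v\<^sub>1 \<notin> low" "v\<^sub>2 \<notin> low" "v\<^sub>1 \<noteq> v\<^sub>2" "s v\<^sub>1 \<noteq> s v\<^sub>2"
proof -
  have "g v\<^sub>1 = t - 1" "g v\<^sub>2 = t" "v\<^sub>1 \<in> V" "v\<^sub>2 \<in> V"
    using vertex t_less_card by (auto simp: v\<^sub>1_def v\<^sub>2_def)
  then show "v\<^sub>1 \<in> V" "v\<^sub>2 \<in> V" "v\<^sub>1 \<notin> low" "v\<^sub>2 \<notin> low" "v\<^sub>1 \<noteq> v\<^sub>2" "s v\<^sub>1 \<noteq> s v\<^sub>2"
    using four_le_t by (auto simp: low_def s_def)
qed

definition low_poly :: "real poly" where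
  "low_poly = node_poly (s ` low)"

definition low_poly_except :: "'a \<Rightarrow> real poly" where
  "low_poly_except a = node_poly (s ` (low - {a}))"

lemma degree_node_poly_low_minus: "degree (node_poly (s ` (low - A))) < t"
proof -
  have "degree (node_poly (s ` (low - A))) \<le> card (low - A)"
    using finite_low by (intro degree_node_poly_s) simp
  also have "\<dots> \<le> card low" using finite_low by (intro card_mono) auto
  finally show ?thesis using card_low four_le_t by simp
qed

lemma degree_low_poly: "degree low_poly < t"
  using degree_node_poly_low_minus[of "{}"] by (simp add: low_poly_def)

lemma degree_low_poly_except: "degree (low_poly_except a) < t"
  by (simp add: low_poly_except_def degree_node_poly_low_minus)

lemma poly_low_poly_s: "x \<in> V \<Longrightarrow> poly low_poly (s x) = 0 \<longleftrightarrow> x \<in> low"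
  using low_subset by (simp add: low_poly_def poly_node_poly_s_eq_0_iff)

lemma poly_low_poly_except_other: "x \<in> low \<Longrightarrow> x \<noteq> a \<Longrightarrow> poly (low_poly_except a) (s x) = 0"
  using finite_low by (simp add: low_poly_except_def poly_node_poly_eq_0_iff)

lemma poly_low_poly_except_self: "a \<in> low \<Longrightarrow> poly (low_poly_except a) (s a) \<noteq> 0"
  using low_subset poly_node_poly_s_eq_0_iff[of "low - {a}" a] by (auto simp: low_poly_except_def)

lemma poly_low_poly_tau: "poly low_poly (tau x) \<noteq> 0"
  using low_subset by (simp add: low_poly_def poly_node_poly_s_tau)

lemma pair2_low_poly_low_clique:
  assumes "e \<in> loop_edges low" "degree Q < t"
  shows "pair_poly2 t low_poly Q (edge_vec e) = 0"
proof -
  obtain x z where xz: "x \<in> low" "z \<in> low" "e = {x, z}" by (rule loop_edges_cases[OF assms(1)])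
  have L0: "poly low_poly (s w) = 0" if "w \<in> low" for w
    using that low_subset poly_low_poly_s by blast
  show ?thesis
  proof (cases "x = z")
    case True
    then show ?thesis
      using xz assms(2) L0 partner(1)[OF xz(1)] by (simp add: pair2_loop pair_y_low degree_low_poly)
  next
    case False
    then show ?thesis using xz assms(2) L0 by (simp add: pair2_edge degree_low_poly)
  qed
qed

lemma low_clique_annihilated:
  assumes "finite B" "loop_edges low \<inter> B = {}"
    and "\<And>ij. (\<Sum>e\<in>loop_edges low \<union> B. c e * edge_vec e ij) = 0" "degree Q < t"
  shows "(\<Sum>e\<in>B. c e * pair_poly2 t low_poly Q (edge_vec e)) = 0"
proof -
  have fin: "finite (loop_edges low)" using finite_low by (rule finite_loop_edges)
  have "(\<Sum>e\<in>loop_edges low \<union> B. c e * pair_poly2 t low_poly Q (edge_vec e)) = 0"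
    using assms(3) by (rule pair_poly2_lin_comb)
  moreover have "(\<Sum>e\<in>loop_edges low. c e * pair_poly2 t low_poly Q (edge_vec e)) = 0"
    using pair2_low_poly_low_clique assms(4) by simp
  ultimately show ?thesis using fin assms(1,2) by (simp add: sum.union_disjoint)
qed

lemma low_clique_loop_coeff_eq_0:
  assumes rel: "\<And>ij. (\<Sum>e\<in>loop_edges low. c e * edge_vec e ij) = 0" and a: "a \<in> low"
  shows "c {a} = 0"
proof (rule coeff_eq_0_by_pair_poly2[OF finite_loop_edges[OF finite_low] rel,
      where P = "low_poly_except a" and Q = "low_poly_except a"])
  show "{a} \<in> loop_edges low" using a by (rule singleton_in_loop_edges)
  have "pair_poly2 t (low_poly_except a) (low_poly_except a) (edge_vec {a})
      = 2 * (poly (low_poly_except a) (s a) * poly (low_poly_except a) (s a))"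
    using a partner[OF a] by (simp add: pair2_loop pair_y_low degree_low_poly_except poly_low_poly_except_other)
  then show "pair_poly2 t (low_poly_except a) (low_poly_except a) (edge_vec {a}) \<noteq> 0"
    using poly_low_poly_except_self[OF a] by simp
next
  fix e assume e: "e \<in> loop_edges low" "e \<noteq> {a}"
  obtain x z where xz: "x \<in> low" "z \<in> low" "e = {x, z}"
    using e(1) by (rule loop_edges_cases)
  show "c e * pair_poly2 t (low_poly_except a) (low_poly_except a) (edge_vec e) = 0"
  proof (cases "x = z")
    case True
    then show ?thesis using xz e by (simp add: pair2_loop degree_low_poly_except poly_low_poly_except_other)
  next
    case False
    then have "x \<noteq> a \<or> z \<noteq> a" by blast
    then show ?thesis using xz False by (auto simp: pair2_edge degree_low_poly_except poly_low_poly_except_other)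
  qed
qed

lemma low_clique_edge_coeff_eq_0:
  assumes rel: "\<And>ij. (\<Sum>e\<in>loop_edges low. c e * edge_vec e ij) = 0"
    and ab: "a \<in> low" "b \<in> low" "a \<noteq> b"
  shows "c {a, b} = 0"
proof (rule coeff_eq_0_by_pair_poly2[OF finite_loop_edges[OF finite_low] rel,
      where P = "low_poly_except a" and Q = "low_poly_except b"])
  show "{a, b} \<in> loop_edges low" using ab(1,2) by (rule doubleton_in_loop_edges)
  show "pair_poly2 t (low_poly_except a) (low_poly_except b) (edge_vec {a, b}) \<noteq> 0"
    using ab poly_low_poly_except_self[of a] poly_low_poly_except_self[of b]
    by (simp add: pair2_edge degree_low_poly_except poly_low_poly_except_other)
next
  fix e assume e: "e \<in> loop_edges low" "e \<noteq> {a, b}"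
  obtain x z where xz: "x \<in> low" "z \<in> low" "e = {x, z}"
    using e(1) by (rule loop_edges_cases)
  show "c e * pair_poly2 t (low_poly_except a) (low_poly_except b) (edge_vec e) = 0"
  proof (cases "x = z")
    case True
    then show ?thesis using xz low_clique_loop_coeff_eq_0[OF rel] by simp
  next
    case False
    have "\<not> (x = a \<and> z = b)" "\<not> (z = a \<and> x = b)" using e xz by auto
    then have vanish: "poly (low_poly_except a) (s x) * poly (low_poly_except b) (s z) = 0"
        "poly (low_poly_except a) (s z) * poly (low_poly_except b) (s x) = 0"
      using xz(1,2) by (auto simp: poly_low_poly_except_other)
    show ?thesis using False by (simp add: xz(3) pair2_edge degree_low_poly_except vanish)
  qed
qed

lemma lin_indep_low_clique: "lin_indep edge_vec (loop_edges low)"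
  unfolding lin_indep_def
proof (intro allI impI ballI)
  fix c e assume rel: "\<forall>ij. (\<Sum>e\<in>loop_edges low. c e * edge_vec e ij) = 0" and "e \<in> loop_edges low"
  then obtain x z where "x \<in> low" "z \<in> low" "e = {x, z}" by (auto elim: loop_edges_cases)
  with rel show "c e = 0"
    using low_clique_loop_coeff_eq_0 low_clique_edge_coeff_eq_0 by (cases "x = z") auto
qed

lemma first_clique_relation:
  assumes rel: "\<And>ij. (\<Sum>e\<in>loop_edges low \<union> star v\<^sub>1 (insert v\<^sub>1 low). c e * edge_vec e ij) = 0"
    and Q: "degree Q < t"
  shows "c {v\<^sub>1} * (poly low_poly (s v\<^sub>1) * poly Q (tau v\<^sub>1) + poly low_poly (tau v\<^sub>1) * poly Q (s v\<^sub>1))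
    + (\<Sum>x\<in>low. c {v\<^sub>1, x} * poly low_poly (s v\<^sub>1) * poly Q (s x)) = 0"
proof -
  have "(\<Sum>e\<in>star v\<^sub>1 (insert v\<^sub>1 low). c e * pair_poly2 t low_poly Q (edge_vec e)) = 0"
    using finite_low
    by (intro low_clique_annihilated[OF _ loop_edges_disjoint_star[OF v\<^sub>1_v\<^sub>2(3)] rel Q])
      (simp add: star_image)
  then have "(\<Sum>x\<in>insert v\<^sub>1 low. c {v\<^sub>1, x} * pair_poly2 t low_poly Q (edge_vec {v\<^sub>1, x})) = 0"
    by (simp only: star_image sum.reindex[OF inj_on_insert_doubleton] o_def)
  moreover have "(\<Sum>x\<in>low. c {v\<^sub>1, x} * pair_poly2 t low_poly Q (edge_vec {v\<^sub>1, x}))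
      = (\<Sum>x\<in>low. c {v\<^sub>1, x} * poly low_poly (s v\<^sub>1) * poly Q (s x))"
  proof (rule sum.cong)
    fix x assume x: "x \<in> low"
    then have "v\<^sub>1 \<noteq> x" "poly low_poly (s x) = 0"
      using v\<^sub>1_v\<^sub>2(3) low_subset poly_low_poly_s by auto
    then show "c {v\<^sub>1, x} * pair_poly2 t low_poly Q (edge_vec {v\<^sub>1, x})
        = c {v\<^sub>1, x} * poly low_poly (s v\<^sub>1) * poly Q (s x)"
      using Q by (simp add: pair2_edge degree_low_poly)
  qed simp
  ultimately show ?thesis
    using finite_low v\<^sub>1_v\<^sub>2(3) Q by (simp add: pair2_loop pair_y_high degree_low_poly)
qed

lemma lin_indep_first_clique: "lin_indep edge_vec (loop_edges (insert v\<^sub>1 low))"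
proof -
  let ?B = "star v\<^sub>1 (insert v\<^sub>1 low)"
  have L1: "poly low_poly (s v\<^sub>1) \<noteq> 0" using v\<^sub>1_v\<^sub>2 poly_low_poly_s by blast
  have L0: "poly low_poly (s x) = 0" if "x \<in> low" for x
    using that low_subset poly_low_poly_s by blast
  have "lin_indep edge_vec (loop_edges low \<union> ?B)"
  proof (rule lin_indep_Un)
    show "finite (loop_edges low)" "finite ?B"
      using finite_low by (simp_all add: finite_loop_edges star_image)
    show "loop_edges low \<inter> ?B = {}" using v\<^sub>1_v\<^sub>2(3) by (rule loop_edges_disjoint_star)
  next
    fix c assume rel: "\<And>ij. (\<Sum>e\<in>loop_edges low \<union> ?B. c e * edge_vec e ij) = 0"
    have c1: "c {v\<^sub>1} = 0"
      using first_clique_relation[OF rel degree_low_poly] L1 poly_low_poly_tau[of v\<^sub>1] by (simp add: L0)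
    have "c {v\<^sub>1, b} = 0" if b: "b \<in> low" for b
    proof -
      have "(\<Sum>x\<in>low. c {v\<^sub>1, x} * poly low_poly (s v\<^sub>1) * poly (low_poly_except b) (s x)) = 0"
        using first_clique_relation[OF rel degree_low_poly_except[of b]] by (simp add: c1)
      then have "c {v\<^sub>1, b} * poly low_poly (s v\<^sub>1) * poly (low_poly_except b) (s b) = 0"
        by (rule sum_eq_0_single_term[OF finite_low b]) (simp add: poly_low_poly_except_other)
      then show ?thesis using L1 poly_low_poly_except_self[OF b] by simp
    qed
    then show "\<forall>e\<in>?B. c e = 0" using c1 by (auto simp: star_def)
  qed (rule lin_indep_low_clique)
  then show ?thesis by (simp add: loop_edges_insert)
qed

lemma two_cliques_relation:
  assumes rel: "\<And>ij. (\<Sum>e\<in>loop_edges low \<union> loop_edges {v\<^sub>1, v\<^sub>2}. c e * edge_vec e ij) = 0"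
    and Q: "degree Q < t"
  shows "c {v\<^sub>1} * (poly low_poly (s v\<^sub>1) * poly Q (tau v\<^sub>1) + poly low_poly (tau v\<^sub>1) * poly Q (s v\<^sub>1))
      + c {v\<^sub>2} * (poly low_poly (s v\<^sub>2) * poly Q (tau v\<^sub>2) + poly low_poly (tau v\<^sub>2) * poly Q (s v\<^sub>2))
      + c {v\<^sub>1, v\<^sub>2} * (poly low_poly (s v\<^sub>1) * poly Q (s v\<^sub>2) + poly low_poly (s v\<^sub>2) * poly Q (s v\<^sub>1)) = 0"
proof -
  have "(\<Sum>e\<in>loop_edges {v\<^sub>1, v\<^sub>2}. c e * pair_poly2 t low_poly Q (edge_vec e)) = 0"
    using rel Q v\<^sub>1_v\<^sub>2(3,4)
    by (intro low_clique_annihilated finite_loop_edges loop_edges_disjoint) auto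
  moreover have "loop_edges {v\<^sub>1, v\<^sub>2} = {{v\<^sub>1}, {v\<^sub>2}, {v\<^sub>1, v\<^sub>2}}" by (auto simp: loop_edges_def)
  moreover have "{v\<^sub>1} \<noteq> {v\<^sub>2}" "{v\<^sub>1} \<noteq> {v\<^sub>1, v\<^sub>2}" "{v\<^sub>2} \<noteq> {v\<^sub>1, v\<^sub>2}"
    using v\<^sub>1_v\<^sub>2(5) by (auto simp: doubleton_eq_iff)
  ultimately show ?thesis
    using Q v\<^sub>1_v\<^sub>2(3,4,5) by (simp add: pair2_loop pair2_edge pair_y_high degree_low_poly add.assoc)
qed

lemma lin_indep_two_cliques: "lin_indep edge_vec (loop_edges low \<union> loop_edges {v\<^sub>1, v\<^sub>2})"
proof (rule lin_indep_Un)
  show "finite (loop_edges low)" "finite (loop_edges {v\<^sub>1, v\<^sub>2})"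
    using finite_low by (simp_all add: finite_loop_edges)
  show "loop_edges low \<inter> loop_edges {v\<^sub>1, v\<^sub>2} = {}"
    using v\<^sub>1_v\<^sub>2(3,4) by (intro loop_edges_disjoint) auto
next
  fix c assume rel: "\<And>ij. (\<Sum>e\<in>loop_edges low \<union> loop_edges {v\<^sub>1, v\<^sub>2}. c e * edge_vec e ij) = 0"
  have tau_neq: "tau v\<^sub>1 \<noteq> tau v\<^sub>2" using v\<^sub>1_v\<^sub>2(6) by (simp add: tau_def)
  have L: "poly low_poly (s v\<^sub>1) \<noteq> 0" "poly low_poly (s v\<^sub>2) \<noteq> 0"
    using v\<^sub>1_v\<^sub>2 poly_low_poly_s by blast+
  have deg: "degree (node_poly {a, b, d}) < t" for a b d
  proof -
    have "degree (node_poly {a, b, d}) \<le> card {a, b, d}" by (rule degree_node_poly) simp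
    also have "\<dots> \<le> 3" by (simp add: card_insert_if)
    finally show ?thesis using four_le_t by simp
  qed
  let ?Q1 = "node_poly {s v\<^sub>1, s v\<^sub>2, tau v\<^sub>2}" and ?Q2 = "node_poly {s v\<^sub>1, s v\<^sub>2, tau v\<^sub>1}"
    and ?Q3 = "node_poly {s v\<^sub>1, s v\<^sub>1, s v\<^sub>1}"
  have "poly ?Q1 (s v\<^sub>1) = 0" "poly ?Q1 (s v\<^sub>2) = 0" "poly ?Q1 (tau v\<^sub>2) = 0" "poly ?Q1 (tau v\<^sub>1) \<noteq> 0"
    using tau_neq by (simp_all add: poly_node_poly_eq_0_iff tau_neq_s)
  with two_cliques_relation[OF rel deg[of "s v\<^sub>1" "s v\<^sub>2" "tau v\<^sub>2"]] L have c1: "c {v\<^sub>1} = 0" by simp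
  have "poly ?Q2 (s v\<^sub>1) = 0" "poly ?Q2 (s v\<^sub>2) = 0" "poly ?Q2 (tau v\<^sub>1) = 0" "poly ?Q2 (tau v\<^sub>2) \<noteq> 0"
    using tau_neq by (simp_all add: poly_node_poly_eq_0_iff tau_neq_s)
  with two_cliques_relation[OF rel deg[of "s v\<^sub>1" "s v\<^sub>2" "tau v\<^sub>1"]] L c1 have c2: "c {v\<^sub>2} = 0" by simp
  have "poly ?Q3 (s v\<^sub>1) = 0" "poly ?Q3 (s v\<^sub>2) \<noteq> 0"
    using v\<^sub>1_v\<^sub>2(6) by (simp_all add: poly_node_poly_eq_0_iff)
  with two_cliques_relation[OF rel deg[of "s v\<^sub>1" "s v\<^sub>1" "s v\<^sub>1"]] L c1 c2 have c3: "c {v\<^sub>1, v\<^sub>2} = 0" by simp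
  show "\<forall>e\<in>loop_edges {v\<^sub>1, v\<^sub>2}. c e = 0"
    using c1 c2 c3 by (auto simp: loop_edges_def insert_commute)
qed (rule lin_indep_low_clique)

lemma mrank_indep: "mrank indep (loop_edges V) = (t + 1) choose 2"
proof (rule mrank_eqI[where J = "loop_edges (insert v\<^sub>1 low)"])
  show "finite (loop_edges V)" using finite_V by (rule finite_loop_edges)
  show "card I \<le> (t + 1) choose 2" if "I \<subseteq> loop_edges V" "indep I" for I
    using that(2) by (rule indep_card_le)
  show sub: "loop_edges (insert v\<^sub>1 low) \<subseteq> loop_edges V"
    using v\<^sub>1_v\<^sub>2(1) low_subset by (auto simp: loop_edges_def)
  show "indep (loop_edges (insert v\<^sub>1 low))"
    using sub lin_indep_first_clique by (simp add: indep_def)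
  show "card (loop_edges (insert v\<^sub>1 low)) = (t + 1) choose 2"
    using finite_low v\<^sub>1_v\<^sub>2(3) card_low four_le_t by (simp add: card_loop_edges)
qed

lemma second_sym_power_indep: "second_sym_power V t (uniform_indep V t) indep"
  unfolding second_sym_power_def
  using matroid_indep mrank_indep mrank_star mrank_uniform_indep[OF finite_V] by auto

lemma not_weak_le_generic: "\<not> weak_le indep (generic_sym_power V t)"
proof
  let ?F = "loop_edges low \<union> loop_edges {v\<^sub>1, v\<^sub>2}"
  assume "weak_le indep (generic_sym_power V t)"
  moreover have "indep ?F"
    using lin_indep_two_cliques low_subset v\<^sub>1_v\<^sub>2(1,2) by (auto simp: indep_def loop_edges_def)
  ultimately obtain p where "sym_lin_indep t p ?F" by (auto simp: weak_le_def generic_sym_power_def)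
  moreover have "t < card low + card {v\<^sub>1, v\<^sub>2}" using card_low v\<^sub>1_v\<^sub>2(5) four_le_t by simp
  ultimately show False
    using not_sym_lin_indep_two_cliques[of low "{v\<^sub>1, v\<^sub>2}" t p] finite_low v\<^sub>1_v\<^sub>2(3,4) by auto
qed

end

theorem theorem5p28:
  fixes V :: "'a set" and n t :: nat
  assumes "finite V" and "card V = n" and "t \<ge> 7" and "n \<ge> 2 * t - 2"
  shows "\<not> unique_maximal_sym_power V t (uniform_indep V t) (generic_sym_power V t)"
proof
  assume unique: "unique_maximal_sym_power V t (uniform_indep V t) (generic_sym_power V t)"
  \<comment> \<open>the bounds on \<open>t\<close> and \<open>n\<close> enter only through \<open>4 \<le> t < n\<close>\<close>
  obtain g where "bij_betw g V {..<card V}"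
    using ex_bij_betw_finite_nat[OF assms(1)] by (auto simp: atLeast0LessThan)
  then interpret moment_construction V t g
    using assms by unfold_locales auto
  obtain M where M: "second_sym_power V t (uniform_indep V t) M" "weak_le indep M"
    "\<forall>M'. second_sym_power V t (uniform_indep V t) M' \<and> weak_le M M' \<longrightarrow> M' = M"
    using ex_maximal_weak_le_above[where P = "second_sym_power V t (uniform_indep V t)",
        OF finite_loop_edges[OF assms(1)] second_sym_power_indep]
    by (auto simp: second_sym_power_def matroid_def)
  with unique have "M = generic_sym_power V t" by (auto simp: unique_maximal_sym_power_def)
  with M(2) not_weak_le_generic show False by simp
qed

end
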